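(* Let functions $w_i,y_i$ ($i\in\mathcal{I}$), $z_j$ ($j\in\mathcal{J}$), $\psi_{ij}$ ($i\in\mathcal{I},j\in\mathcal{J}$, with $\psi_{ij}=0$ for $i\not\sim j$) be measurable and locally bounded on $[0,\infty)$ and satisfy $$\sum_{j\in\mathcal{J}}\mathfrak{T}_{\mu_{ij}}\psi_{ij}=w_i-\mathfrak{T}_{\theta_i}y_i,\quad i\in\mathcal{I},\qquad \sum_{i\in\mathcal{I}}\psi_{ij}=-z_j,\quad j\in\mathcal{J}.$$ (i) Then there are finite (possibly empty) sequences $A_i$ ($i\in\mathcal{I}$) and $B_j$ ($j\in\mathcal{J}$) with values in $\{\mu_{ij}:(i,j)\in\mathcal{E}\}$, such that, letting $A_i'$ denote the concatenation of $A_i$ with $\theta_i$, $$\sum_{i\in\mathcal{I}}\mathfrak{T}_{A_i}w_i-\sum_{i\in\mathcal{I}}\mathfrak{T}_{A_i'}y_i+\sum_{j\in\mathcal{J}}\mathfrak{T}_{B_j}z_j=0.$$ (ii) If $\mu_{ij}=\mu_j$ for $(i,j)\in\mathcal{E}$ and $\theta_i=0$ for $i\in\mathcal{I}$, then $\sum_{i\in\mathcal{I}}(w_i-y_i)+\sum_{j\in\mathcal{J}}\mathfrak{T}_{\mu_j}z_j=0$. (iii) If $\mu_{ij}=\mu_i$ for $(i,j)\in\mathcal{E}$ and $\theta_i=0$ for $i\in\mathcal{I}$, then $\sum_{i\in\mathcal{I}}\mathfrak{T}_{M_i}(w_i-y_i)+\mathfrak{T}_M(e\cdot z)=0$, where $M_i=(\mu_{i'})_{i'\in\mathcal{I},i'\ne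 i}$ and $M=(\mu_{i'})_{i'\in\mathcal{I}}$.
   Context: $\mathcal{I}=\{1,\dots,I\}$, $\mathcal{J}=\{I+1,\dots,I+J\}$, $\mathcal{E}\subset\mathcal{I}\times\mathcal{J}$, $i\sim j$ iff $(i,j)\in\mathcal{E}$; the bipartite graph $\mathcal{T}$ with vertices $\mathcal{I}\cup\mathcal{J}$ and edges $\mathcal{E}$ is a tree. Constants $\mu_{ij}>0$ for $(i,j)\in\mathcal{E}$, $\mu_{ij}=0$ otherwise, and $\theta_i\ge0$. For $f:[0,\infty)\to\mathbb{R}$ locally bounded measurable, $\mathfrak{J}f(t)=\int_0^tf(s)ds$ and, for $\alpha\in\mathbb{R}$, $\mathfrak{T}_\alpha f=f+\alpha\mathfrak{J}f$. For a finite real sequence $A=(\alpha_1,\dots,\alpha_k)$, $\mathfrak{T}_A=\mathfrak{T}_{\alpha_1}\circ\cdots\circ\mathfrak{T}_{\alpha_k}$ (identity if $A$ is empty). $e=(1,\dots,1)'$. *)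

theory Defs
  imports "HOL-Analysis.Analysis"
begin

definition undir :: "(nat \<times> nat) set \<Rightarrow> (nat \<times> nat) set" where
  "undir E = E \<union> E\<inverse>"

text \<open>A tree: nonempty vertex set, edges between vertices, connected, and acyclic
  (no edge lies on a cycle, i.e. removing any edge disconnects its endpoints).\<close>
definition is_tree :: "nat set \<Rightarrow> (nat \<times> nat) set \<Rightarrow> bool" where
  "is_tree V E \<longleftrightarrow> V \<noteq> {} \<and> E \<subseteq> V \<times> V
     \<and> (\<forall>u\<in>V. \<forall>v\<in>V. (u, v) \<in> (undir E)\<^sup>*)
     \<and> (\<forall>(a, b)\<in>E. (a, b) \<notin> (undir (E - {(a, b)}))\<^sup>*)"

definition Jop :: "(real \<Rightarrow> real) \<Rightarrow> real \<Rightarrow> real" where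
  "Jop f t = (LINT s:{0..t}|lborel. f s)"

definition Top :: "real \<Rightarrow> (real \<Rightarrow> real) \<Rightarrow> real \<Rightarrow> real" where
  "Top \<alpha> f t = f t + \<alpha> * Jop f t"

fun Tseq :: "real list \<Rightarrow> (real \<Rightarrow> real) \<Rightarrow> real \<Rightarrow> real" where
  "Tseq [] f = f"
| "Tseq (a # as) f = Top a (Tseq as f)"

definition meas_locbdd :: "(real \<Rightarrow> real) \<Rightarrow> bool" where
  "meas_locbdd f \<longleftrightarrow> set_borel_measurable lborel {0..} f
     \<and> (\<forall>T\<ge>0. \<exists>C. \<forall>t\<in>{0..T}. \<bar>f t\<bar> \<le> C)"

end

theory Submission
  imports Defs
begin

text \<open>The operators \<open>Top a\<close> are linear and commute, so \<open>Tseq\<close> only depends on the multiset of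
  its rates. Suppose each vertex \<open>v\<close> carries rates \<open>P v\<close> with \<open>P j = P i + {\<mu> i j}\<close> (as multisets)
  along every edge \<open>(i, j)\<close>. Applying \<open>Tseq (P i)\<close> to the equation of each \<open>i\<close> turns the flow
  \<open>\<psi> i j\<close> into \<open>Tseq (P j) (\<psi> i j)\<close>, and applying \<open>Tseq (P j)\<close> to the equation of each \<open>j\<close> produces
  the same terms with the opposite sign, so the flows cancel in the sum of all equations. On a tree
  such a potential exists: \<open>P v\<close> collects the rates of the edges \<open>(a, b)\<close> for which \<open>v\<close> lies on the
  side of \<open>b\<close>. Parts (ii) and (iii) use the explicit potentials \<open>P i = []\<close>, \<open>P j = [\<mu>J j]\<close> and
  \<open>P i = M\<^sub>i\<close>, \<open>P j = M\<close>.\<close>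

definition locally_integrable :: "(real \<Rightarrow> real) \<Rightarrow> bool" where
  "locally_integrable f \<longleftrightarrow> (\<forall>t. set_integrable lborel {0..t} f)"

lemma locally_integrable_const: "locally_integrable (\<lambda>_. c)"
  unfolding locally_integrable_def set_integrable_def
  by (intro allI borel_integrable_compact) auto

lemma meas_locbdd_imp_locally_integrable:
  assumes "meas_locbdd f"
  shows "locally_integrable f"
  unfolding locally_integrable_def
proof
  fix t :: real
  show "set_integrable lborel {0..t} f"
  proof (cases "t \<ge> 0")
    case True
    then obtain C where C: "\<forall>s\<in>{0..t}. \<bar>f s\<bar> \<le> C"
      using assms unfolding meas_locbdd_def by blast
    have bounded_by: "set_integrable lborel {0..t} (\<lambda>_. C)"
      using locally_integrable_const unfolding locally_integrable_def by blast
    have "set_borel_measurable lborel {0..t} f"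
      by (rule set_borel_measurable_subset[of _ "{0..}"]) (use assms in \<open>auto simp: meas_locbdd_def\<close>)
    then show ?thesis
      by (rule set_integrable_bound[OF bounded_by]) (use C in \<open>fastforce intro!: AE_I2\<close>)
  qed (simp add: set_integrable_def)
qed

lemma locally_integrable_add:
  "locally_integrable f \<Longrightarrow> locally_integrable g \<Longrightarrow> locally_integrable (\<lambda>s. f s + g s)"
  unfolding locally_integrable_def by auto

lemma locally_integrable_cmult: "locally_integrable f \<Longrightarrow> locally_integrable (\<lambda>s. c * f s)"
  unfolding locally_integrable_def by auto

lemma locally_integrable_sum:
  "finite S \<Longrightarrow> (\<And>i. i \<in> S \<Longrightarrow> locally_integrable (f i)) \<Longrightarrow>
    locally_integrable (\<lambda>s. \<Sum>i\<in>S. f i s)"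
  by (induction S rule: finite_induct) (auto intro!: locally_integrable_add locally_integrable_const)

lemma locally_integrable_Jop:
  assumes "locally_integrable f"
  shows "locally_integrable (Jop f)"
  unfolding locally_integrable_def
proof
  fix T :: real
  show "set_integrable lborel {0..T} (Jop f)"
  proof (cases "T \<ge> 0")
    case True
    have "f integrable_on {0..T}"
      using assms set_borel_integral_eq_integral(1) unfolding locally_integrable_def by blast
    moreover have "Jop f x = integral {0..x} f" for x
      using assms unfolding locally_integrable_def Jop_def by (simp add: set_borel_integral_eq_integral)
    ultimately have "continuous_on {0..T} (Jop f)"
      using indefinite_integral_continuous_1 by simp
    then show ?thesis
      unfolding set_integrable_def by (intro borel_integrable_compact) auto
  qed (simp add: set_integrable_def)
qed

lemma locally_integrable_Top: "locally_integrable f \<Longrightarrow> locally_integrable (Top a f)"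
  unfolding Top_def[abs_def]
  by (intro locally_integrable_add locally_integrable_cmult locally_integrable_Jop)

lemma locally_integrable_Tseq: "locally_integrable f \<Longrightarrow> locally_integrable (Tseq xs f)"
  by (induction xs) (auto intro: locally_integrable_Top)

lemma Jop_add:
  "locally_integrable f \<Longrightarrow> locally_integrable g \<Longrightarrow> Jop (\<lambda>s. f s + g s) t = Jop f t + Jop g t"
  unfolding locally_integrable_def Jop_def by (simp add: set_integral_add)

lemma Jop_cmult: "Jop (\<lambda>s. c * f s) t = c * Jop f t"
  unfolding Jop_def by simp

lemma Jop_minus: "Jop (\<lambda>s. - f s) t = - Jop f t"
  unfolding Jop_def by (simp add: set_lebesgue_integral_def)

lemma Jop_zero: "Jop (\<lambda>_. 0) t = 0"
  unfolding Jop_def by (simp add: set_lebesgue_integral_def)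

lemma Jop_cong: "(\<And>s. s \<ge> 0 \<Longrightarrow> f s = g s) \<Longrightarrow> Jop f t = Jop g t"
  unfolding Jop_def by (rule set_lebesgue_integral_cong) auto

lemma Top_0 [simp]: "Top 0 f = f"
  by (simp add: Top_def fun_eq_iff)

lemma Top_commute:
  assumes "locally_integrable f"
  shows "Top a (Top b f) = Top b (Top a f)"
proof
  fix t
  have Jop_Top: "Jop (Top c f) t = Jop f t + c * Jop (Jop f) t" for c
    unfolding Top_def[abs_def]
    using assms locally_integrable_Jop locally_integrable_cmult by (simp add: Jop_add Jop_cmult)
  show "Top a (Top b f) t = Top b (Top a f) t"
    unfolding Top_def[of a "Top b f"] Top_def[of b "Top a f"] Jop_Top
    by (simp add: Top_def algebra_simps)
qed

lemma Tseq_append: "Tseq (xs @ ys) f = Tseq xs (Tseq ys f)"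
  by (induction xs) auto

lemma Tseq_Top_commute: "locally_integrable f \<Longrightarrow> Tseq xs (Top a f) = Top a (Tseq xs f)"
  by (induction xs) (simp_all add: Top_commute locally_integrable_Tseq)

lemma Tseq_perm:
  "locally_integrable f \<Longrightarrow> mset xs = mset ys \<Longrightarrow> Tseq xs f = Tseq ys f"
proof (induction xs arbitrary: ys)
  case (Cons a xs)
  then obtain ys1 ys2 where ys: "ys = ys1 @ a # ys2"
    by (metis list.set_intros(1) set_mset_mset split_list)
  then have "Tseq xs f = Tseq (ys1 @ ys2) f"
    using Cons by simp
  moreover have "Tseq ys f = Top a (Tseq (ys1 @ ys2) f)"
    unfolding ys Tseq_append using Cons.prems(1)
    by (simp add: Tseq_Top_commute locally_integrable_Tseq)
  ultimately show ?case
    by (simp only: Tseq.simps)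
qed simp

lemma Top_cong: "(\<And>s. s \<ge> 0 \<Longrightarrow> f s = g s) \<Longrightarrow> t \<ge> 0 \<Longrightarrow> Top a f t = Top a g t"
  unfolding Top_def using Jop_cong[of f g t] by simp

lemma Tseq_cong: "(\<And>s. s \<ge> 0 \<Longrightarrow> f s = g s) \<Longrightarrow> t \<ge> 0 \<Longrightarrow> Tseq xs f t = Tseq xs g t"
  by (induction xs arbitrary: t) (auto intro: Top_cong)

lemma Tseq_zero: "Tseq xs (\<lambda>_. 0) = (\<lambda>_. 0)"
  by (induction xs) (auto simp: Top_def Jop_zero)

lemma Tseq_minus: "Tseq xs (\<lambda>s. - f s) = (\<lambda>s. - Tseq xs f s)"
  by (induction xs) (auto simp: Top_def Jop_minus)

lemma Top_add:
  "locally_integrable f \<Longrightarrow> locally_integrable g \<Longrightarrow>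
    Top a (\<lambda>s. f s + g s) = (\<lambda>s. Top a f s + Top a g s)"
  by (simp add: Top_def fun_eq_iff Jop_add algebra_simps)

lemma Tseq_add:
  "locally_integrable f \<Longrightarrow> locally_integrable g \<Longrightarrow>
    Tseq xs (\<lambda>s. f s + g s) = (\<lambda>s. Tseq xs f s + Tseq xs g s)"
  by (induction xs) (simp_all add: Top_add locally_integrable_Tseq)

lemma Tseq_diff:
  assumes "locally_integrable f" "locally_integrable g"
  shows "Tseq xs (\<lambda>s. f s - g s) = (\<lambda>s. Tseq xs f s - Tseq xs g s)"
  using Tseq_add[OF assms(1) locally_integrable_cmult[OF assms(2), of "-1"], of xs]
  by (simp add: Tseq_minus)

lemma Tseq_sum:
  "finite S \<Longrightarrow> (\<And>i. i \<in> S \<Longrightarrow> locally_integrable (f i)) \<Longrightarrow>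
    Tseq xs (\<lambda>s. \<Sum>i\<in>S. f i s) = (\<lambda>s. \<Sum>i\<in>S. Tseq xs (f i) s)"
proof (induction S rule: finite_induct)
  case (insert x S)
  then have "Tseq xs (\<lambda>s. \<Sum>i\<in>insert x S. f i s) = Tseq xs (\<lambda>s. f x s + (\<Sum>i\<in>S. f i s))"
    by simp
  also have "\<dots> = (\<lambda>s. Tseq xs (f x) s + Tseq xs (\<lambda>s. \<Sum>i\<in>S. f i s) s)"
    using insert by (intro Tseq_add locally_integrable_sum) auto
  also have "\<dots> = (\<lambda>s. \<Sum>i\<in>insert x S. Tseq xs (f i) s)"
    using insert by simp
  finally show ?case .
qed (simp add: Tseq_zero)

definition toward_edges :: "(nat \<times> nat) set \<Rightarrow> nat \<Rightarrow> (nat \<times> nat) set" where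
  "toward_edges E v = {(a, b) \<in> E. (b, v) \<in> (undir (E - {(a, b)}))\<^sup>*}"

lemma toward_edges_across_edge:
  assumes "is_tree V E" "(i, j) \<in> E"
  shows "toward_edges E j = insert (i, j) (toward_edges E i)" and "(i, j) \<notin> toward_edges E i"
proof -
  have undir_star_sym: "sym ((undir F)\<^sup>*)" for F
    by (rule sym_rtrancl) (auto simp: undir_def sym_def)
  have "(i, j) \<notin> (undir (E - {(i, j)}))\<^sup>*"
    using assms unfolding is_tree_def by blast
  then show "(i, j) \<notin> toward_edges E i"
    using undir_star_sym unfolding toward_edges_def by (auto dest: symD)
  have same_side: "(b, i) \<in> (undir (E - {(a, b)}))\<^sup>* \<longleftrightarrow> (b, j) \<in> (undir (E - {(a, b)}))\<^sup>*"
    if "(a, b) \<noteq> (i, j)" for a b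
  proof -
    have "(i, j) \<in> (undir (E - {(a, b)}))\<^sup>*" and "(j, i) \<in> (undir (E - {(a, b)}))\<^sup>*"
      using assms(2) that by (auto simp: undir_def)
    then show ?thesis
      using rtrancl_trans by metis
  qed
  have "(a, b) \<in> toward_edges E j \<longleftrightarrow> (a, b) = (i, j) \<or> (a, b) \<in> toward_edges E i" for a b
    using assms(2) same_side[of a b] unfolding toward_edges_def by (cases "(a, b) = (i, j)") auto
  then show "toward_edges E j = insert (i, j) (toward_edges E i)"
    by auto
qed

lemma tree_rate_potential:
  fixes \<mu> :: "nat \<Rightarrow> nat \<Rightarrow> real"
  assumes "is_tree V E" "finite E"
  obtains P :: "nat \<Rightarrow> real list"
  where "\<And>v. set (P v) \<subseteq> {\<mu> a b |a b. (a, b) \<in> E}"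
    and "\<And>i j. (i, j) \<in> E \<Longrightarrow> mset (P j) = add_mset (\<mu> i j) (mset (P i))"
proof -
  let ?P = "\<lambda>v. sorted_list_of_multiset (image_mset (\<lambda>(a, b). \<mu> a b) (mset_set (toward_edges E v)))"
  have toward_subset: "toward_edges E v \<subseteq> E" for v
    unfolding toward_edges_def by auto
  then have finite_toward: "finite (toward_edges E v)" for v
    using assms(2) finite_subset by blast
  show ?thesis
  proof (rule that[of ?P])
    show "set (?P v) \<subseteq> {\<mu> a b |a b. (a, b) \<in> E}" for v
      using finite_toward toward_subset by fastforce
    show "mset (?P j) = add_mset (\<mu> i j) (mset (?P i))" if "(i, j) \<in> E" for i j
      using toward_edges_across_edge[OF assms(1) that] finite_toward by simp
  qed
qed

lemma mset_eq_add_mset_filter_neq: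
  assumes "distinct xs" "x \<in> set xs"
  shows "mset xs = add_mset x (mset (filter (\<lambda>y. y \<noteq> x) xs))"
proof -
  have "filter (\<lambda>y. y \<noteq> x) xs = remove1 x xs"
    using assms(1) by (simp add: distinct_remove1_removeAll removeAll_filter_not_eq eq_commute)
  then show ?thesis
    using assms(2) by simp
qed

locale edge_flow_system =
  fixes Is Js :: "nat set"
    and E :: "(nat \<times> nat) set"
    and \<mu> :: "nat \<Rightarrow> nat \<Rightarrow> real"
    and \<theta> :: "nat \<Rightarrow> real"
    and w y z :: "nat \<Rightarrow> real \<Rightarrow> real"
    and \<psi> :: "nat \<Rightarrow> nat \<Rightarrow> real \<Rightarrow> real"
  assumes finite_Is: "finite Is" and finite_Js: "finite Js"
    and w_int: "\<And>i. i \<in> Is \<Longrightarrow> locally_integrable (w i)"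
    and y_int: "\<And>i. i \<in> Is \<Longrightarrow> locally_integrable (y i)"
    and z_int: "\<And>j. j \<in> Js \<Longrightarrow> locally_integrable (z j)"
    and psi_int: "\<And>i j. i \<in> Is \<Longrightarrow> j \<in> Js \<Longrightarrow> locally_integrable (\<psi> i j)"
    and psi_off_edges: "\<And>i j t. i \<in> Is \<Longrightarrow> j \<in> Js \<Longrightarrow> (i, j) \<notin> E \<Longrightarrow> t \<ge> 0 \<Longrightarrow> \<psi> i j t = 0"
    and balance_I: "\<And>i t. i \<in> Is \<Longrightarrow> t \<ge> 0 \<Longrightarrow>
      (\<Sum>j\<in>Js. Top (\<mu> i j) (\<psi> i j) t) = w i t - Top (\<theta> i) (y i) t"
    and balance_J: "\<And>j t. j \<in> Js \<Longrightarrow> t \<ge> 0 \<Longrightarrow> (\<Sum>i\<in>Is. \<psi> i j t) = - z j t"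
begin

lemma potential_identity:
  assumes potential: "\<And>i j. i \<in> Is \<Longrightarrow> j \<in> Js \<Longrightarrow> (i, j) \<in> E \<Longrightarrow>
      mset (Q j) = add_mset (\<mu> i j) (mset (P i))"
    and t: "t \<ge> 0"
  shows "(\<Sum>i\<in>Is. Tseq (P i) (w i) t) - (\<Sum>i\<in>Is. Tseq (P i @ [\<theta> i]) (y i) t)
      + (\<Sum>j\<in>Js. Tseq (Q j) (z j) t) = 0"
proof -
  have edge_term: "Tseq (P i) (Top (\<mu> i j) (\<psi> i j)) t = Tseq (Q j) (\<psi> i j) t"
    if "i \<in> Is" "j \<in> Js" for i j
  proof (cases "(i, j) \<in> E")
    case True
    then have "Tseq (P i @ [\<mu> i j]) (\<psi> i j) = Tseq (Q j) (\<psi> i j)"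
      using potential that psi_int by (intro Tseq_perm) auto
    then show ?thesis
      by (simp add: Tseq_append)
  next
    case False
    then have "Tseq xs (\<psi> i j) t = Tseq xs (\<lambda>_. 0) t" for xs
      using psi_off_edges that t by (intro Tseq_cong) auto
    from this[of "P i @ [\<mu> i j]"] this[of "Q j"] show ?thesis
      by (simp add: Tseq_zero Tseq_append)
  qed
  have "(\<Sum>i\<in>Is. Tseq (P i) (w i) t) - (\<Sum>i\<in>Is. Tseq (P i @ [\<theta> i]) (y i) t)
      = (\<Sum>i\<in>Is. Tseq (P i) (w i) t - Tseq (P i) (Top (\<theta> i) (y i)) t)"
    by (simp add: Tseq_append sum_subtractf)
  also have "\<dots> = (\<Sum>i\<in>Is. Tseq (P i) (\<lambda>s. w i s - Top (\<theta> i) (y i) s) t)"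
    using w_int y_int by (auto intro!: sum.cong simp: Tseq_diff locally_integrable_Top)
  also have "\<dots> = (\<Sum>i\<in>Is. Tseq (P i) (\<lambda>s. \<Sum>j\<in>Js. Top (\<mu> i j) (\<psi> i j) s) t)"
    using balance_I t by (intro sum.cong refl Tseq_cong) auto
  also have "\<dots> = (\<Sum>i\<in>Is. \<Sum>j\<in>Js. Tseq (P i) (Top (\<mu> i j) (\<psi> i j)) t)"
    using finite_Js psi_int by (auto intro!: sum.cong simp: Tseq_sum locally_integrable_Top)
  also have "\<dots> = (\<Sum>i\<in>Is. \<Sum>j\<in>Js. Tseq (Q j) (\<psi> i j) t)"
    using edge_term by (intro sum.cong refl)
  also have "\<dots> = (\<Sum>j\<in>Js. Tseq (Q j) (\<lambda>s. \<Sum>i\<in>Is. \<psi> i j s) t)"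
    using finite_Is psi_int by (subst sum.swap) (auto intro!: sum.cong simp: Tseq_sum)
  also have "\<dots> = (\<Sum>j\<in>Js. Tseq (Q j) (\<lambda>s. - z j s) t)"
    using balance_J t by (intro sum.cong refl Tseq_cong) auto
  also have "\<dots> = - (\<Sum>j\<in>Js. Tseq (Q j) (z j) t)"
    by (simp add: Tseq_minus sum_negf)
  finally show ?thesis
    by simp
qed

lemma tree_potential_identity:
  assumes "is_tree V E" "finite E"
  shows "\<exists>A B :: nat \<Rightarrow> real list.
            (\<forall>i\<in>Is. set (A i) \<subseteq> {\<mu> a b |a b. (a, b) \<in> E})
          \<and> (\<forall>j\<in>Js. set (B j) \<subseteq> {\<mu> a b |a b. (a, b) \<in> E})
          \<and> (\<forall>t\<ge>0. (\<Sum>i\<in>Is. Tseq (A i) (w i) t) - (\<Sum>i\<in>Is. Tseq (A i @ [\<theta> i]) (y i) t)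
                     + (\<Sum>j\<in>Js. Tseq (B j) (z j) t) = 0)"
proof -
  obtain P where "\<And>v. set (P v) \<subseteq> {\<mu> a b |a b. (a, b) \<in> E}"
    and "\<And>i j. (i, j) \<in> E \<Longrightarrow> mset (P j) = add_mset (\<mu> i j) (mset (P i))"
    using tree_rate_potential[OF assms, of \<mu>] by blast
  then show ?thesis
    using potential_identity[of P P] by blast
qed

lemma common_target_rate_identity:
  assumes "\<forall>(i, j)\<in>E. \<mu> i j = \<mu>J j" and "\<forall>i\<in>Is. \<theta> i = 0" and "t \<ge> 0"
  shows "(\<Sum>i\<in>Is. w i t - y i t) + (\<Sum>j\<in>Js. Top (\<mu>J j) (z j) t) = 0"
proof -
  have "(\<Sum>i\<in>Is. Tseq [] (w i) t) - (\<Sum>i\<in>Is. Tseq ([] @ [\<theta> i]) (y i) t)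
      + (\<Sum>j\<in>Js. Tseq [\<mu>J j] (z j) t) = 0"
    using assms by (intro potential_identity) auto
  moreover have "(\<Sum>i\<in>Is. Tseq ([] @ [\<theta> i]) (y i) t) = (\<Sum>i\<in>Is. y i t)"
    using assms(2) by (intro sum.cong) auto
  ultimately show ?thesis
    by (simp add: sum_subtractf)
qed

lemma common_source_rate_identity:
  assumes "distinct xs" and "set xs = Is"
    and "\<forall>(i, j)\<in>E. \<mu> i j = \<mu>I i" and "\<forall>i\<in>Is. \<theta> i = 0" and "t \<ge> 0"
  shows "(\<Sum>i\<in>Is. Tseq (map \<mu>I (filter (\<lambda>i'. i' \<noteq> i) xs)) (\<lambda>s. w i s - y i s) t)
      + Tseq (map \<mu>I xs) (\<lambda>s. \<Sum>j\<in>Js. z j s) t = 0"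
proof -
  let ?M = "map \<mu>I xs" and ?M_without = "\<lambda>i. map \<mu>I (filter (\<lambda>i'. i' \<noteq> i) xs)"
  have "(\<Sum>i\<in>Is. Tseq (?M_without i) (w i) t) - (\<Sum>i\<in>Is. Tseq (?M_without i @ [\<theta> i]) (y i) t)
      + (\<Sum>j\<in>Js. Tseq ?M (z j) t) = 0"
  proof (rule potential_identity)
    fix i j
    assume edge: "i \<in> Is" "(i, j) \<in> E"
    have "mset xs = add_mset i (mset (filter (\<lambda>i'. i' \<noteq> i) xs))"
      using assms(1,2) edge(1) by (intro mset_eq_add_mset_filter_neq) auto
    moreover have "\<mu> i j = \<mu>I i"
      using assms(3) edge(2) by auto
    ultimately show "mset ?M = add_mset (\<mu> i j) (mset (?M_without i))"
      by (metis image_mset_add_mset mset_map)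
  qed fact
  moreover have "(\<Sum>i\<in>Is. Tseq (?M_without i @ [\<theta> i]) (y i) t) = (\<Sum>i\<in>Is. Tseq (?M_without i) (y i) t)"
    using assms(4) by (intro sum.cong) (auto simp: Tseq_append)
  moreover have "(\<Sum>i\<in>Is. Tseq (?M_without i) (w i) t) - (\<Sum>i\<in>Is. Tseq (?M_without i) (y i) t)
      = (\<Sum>i\<in>Is. Tseq (?M_without i) (\<lambda>s. w i s - y i s) t)"
    using w_int y_int by (auto simp: sum_subtractf Tseq_diff intro!: sum.cong)
  moreover have "(\<Sum>j\<in>Js. Tseq ?M (z j) t) = Tseq ?M (\<lambda>s. \<Sum>j\<in>Js. z j s) t"
    using finite_Js z_int by (simp add: Tseq_sum)
  ultimately show ?thesis
    by simp
qed

end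

theorem theorem2:
  fixes nI nJ :: nat
    and E :: "(nat \<times> nat) set"
    and \<mu> :: "nat \<Rightarrow> nat \<Rightarrow> real"
    and \<theta> :: "nat \<Rightarrow> real"
    and w y :: "nat \<Rightarrow> real \<Rightarrow> real"
    and z :: "nat \<Rightarrow> real \<Rightarrow> real"
    and \<psi> :: "nat \<Rightarrow> nat \<Rightarrow> real \<Rightarrow> real"
  defines "Is \<equiv> {1..nI}" and "Js \<equiv> {nI+1..nI+nJ}"
  assumes E_sub: "E \<subseteq> Is \<times> Js"
    and tree: "is_tree (Is \<union> Js) E"
    and mu_pos: "\<And>i j. (i, j) \<in> E \<Longrightarrow> \<mu> i j > 0"
    and mu_zero: "\<And>i j. (i, j) \<notin> E \<Longrightarrow> \<mu> i j = 0"
    and theta_nonneg: "\<And>i. i \<in> Is \<Longrightarrow> \<theta> i \<ge> 0"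
    and w_reg: "\<And>i. i \<in> Is \<Longrightarrow> meas_locbdd (w i)"
    and y_reg: "\<And>i. i \<in> Is \<Longrightarrow> meas_locbdd (y i)"
    and z_reg: "\<And>j. j \<in> Js \<Longrightarrow> meas_locbdd (z j)"
    and psi_reg: "\<And>i j. i \<in> Is \<Longrightarrow> j \<in> Js \<Longrightarrow> meas_locbdd (\<psi> i j)"
    and psi_zero: "\<And>i j t. i \<in> Is \<Longrightarrow> j \<in> Js \<Longrightarrow> (i, j) \<notin> E \<Longrightarrow> \<psi> i j t = 0"
    and eq_I: "\<And>i t. i \<in> Is \<Longrightarrow> t \<ge> 0 \<Longrightarrow>
        (\<Sum>j\<in>Js. Top (\<mu> i j) (\<psi> i j) t) = w i t - Top (\<theta> i) (y i) t"
    and eq_J: "\<And>j t. j \<in> Js \<Longrightarrow> t \<ge> 0 \<Longrightarrow> (\<Sum>i\<in>Is. \<psi> i j t) = - z j t"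
  shows "(\<exists>A B :: nat \<Rightarrow> real list.
            (\<forall>i\<in>Is. set (A i) \<subseteq> {\<mu> a b |a b. (a, b) \<in> E})
          \<and> (\<forall>j\<in>Js. set (B j) \<subseteq> {\<mu> a b |a b. (a, b) \<in> E})
          \<and> (\<forall>t\<ge>0. (\<Sum>i\<in>Is. Tseq (A i) (w i) t) - (\<Sum>i\<in>Is. Tseq (A i @ [\<theta> i]) (y i) t)
                     + (\<Sum>j\<in>Js. Tseq (B j) (z j) t) = 0))
       \<and> (\<forall>\<mu>J :: nat \<Rightarrow> real.
            (\<forall>(i, j)\<in>E. \<mu> i j = \<mu>J j) \<and> (\<forall>i\<in>Is. \<theta> i = 0) \<longrightarrow>
            (\<forall>t\<ge>0. (\<Sum>i\<in>Is. w i t - y i t) + (\<Sum>j\<in>Js. Top (\<mu>J j) (z j) t) = 0))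
       \<and> (\<forall>\<mu>I :: nat \<Rightarrow> real.
            (\<forall>(i, j)\<in>E. \<mu> i j = \<mu>I i) \<and> (\<forall>i\<in>Is. \<theta> i = 0) \<longrightarrow>
            (\<forall>t\<ge>0. (\<Sum>i\<in>Is. Tseq (map \<mu>I (filter (\<lambda>i'. i' \<noteq> i) [1..<nI+1]))
                                    (\<lambda>s. w i s - y i s) t)
                     + Tseq (map \<mu>I [1..<nI+1]) (\<lambda>s. \<Sum>j\<in>Js. z j s) t = 0))"
proof -
  have "finite Is" "finite Js"
    unfolding Is_def Js_def by auto
  then have "finite E"
    using E_sub by (meson finite_SigmaI finite_subset)
  interpret edge_flow_system Is Js E \<mu> \<theta> w y z \<psi>
    using \<open>finite Is\<close> \<open>finite Js\<close> w_reg y_reg z_reg psi_reg psi_zero eq_I eq_J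
    by unfold_locales (auto intro: meas_locbdd_imp_locally_integrable)
  have "distinct [1..<nI+1]" and "set [1..<nI+1] = Is"
    unfolding Is_def by auto
  then show ?thesis
    using tree_potential_identity[OF tree \<open>finite E\<close>] common_target_rate_identity
      common_source_rate_identity[of "[1..<nI+1]"]
    by blast
qed

end
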